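(* Let $k\ge 2$ and $1\le l_1\le l_2\le\cdots\le l_k$ be integers. If the generalized theta graph $\Theta_{l_1,l_2,\dots,l_k}$ is cyclically orderable, then $$\frac{\sum_{i=1}^{t} l_i}{t-1}\ \ge\ \frac{\sum_{i=1}^{k} l_i}{k-1}$$ for every integer $t$ with $2\le t\le k$.
   Context: The generalized theta graph $\Theta_{l_1,\dots,l_k}$ (with $l_1\le\cdots\le l_k$) is the graph obtained by joining two distinct vertices by $k$ internally vertex-disjoint paths of lengths $l_1,l_2,\dots,l_k$. A cyclic base ordering (CBO) of a connected graph $G$ is a bijection $\mathcal{O}:E(G)\to\{1,\dots,|E(G)|\}$ such that for every $i\in\{1,\dots,|E(G)|\}$ the edges $\mathcal{O}^{-1}(i),\dots,\mathcal{O}^{-1}(i+|V(G)|-2)$ (indices taken cyclically modulo $|E(G)|$) induce a spanning tree of $G$; $G$ is cyclically orderable if it has a CBO. *)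

theory Defs
  imports Complex_Main
begin

text \<open>Finite multigraphs: vertex set V, edge set E, and an endpoint map
  ends assigning to each edge its (unordered) pair of endpoints.
  Parallel edges are allowed (needed when several l_i equal 1).\<close>

definition adj_in :: "('e \<Rightarrow> 'v set) \<Rightarrow> 'e set \<Rightarrow> 'v \<Rightarrow> 'v \<Rightarrow> bool" where
  "adj_in ends F x y \<longleftrightarrow> (\<exists>e\<in>F. ends e = {x, y})"

definition spanning_tree :: "'v set \<Rightarrow> ('e \<Rightarrow> 'v set) \<Rightarrow> 'e set \<Rightarrow> bool" where
  "spanning_tree V ends F \<longleftrightarrow>
     (\<forall>x\<in>V. \<forall>y\<in>V. (adj_in ends F)\<^sup>*\<^sup>* x y) \<and> card F = card V - 1"

text \<open>Cyclic base ordering: a bijection O from E onto {1..|E|} such that for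
  every i, the edges O^-1(i),...,O^-1(i+|V|-2) (indices cyclic mod |E|)
  induce a spanning tree.\<close>
definition is_CBO :: "'v set \<Rightarrow> 'e set \<Rightarrow> ('e \<Rightarrow> 'v set) \<Rightarrow> ('e \<Rightarrow> nat) \<Rightarrow> bool" where
  "is_CBO V E ends ord \<longleftrightarrow>
     bij_betw ord E {1..card E} \<and>
     (\<forall>i\<in>{1..card E}.
        spanning_tree V ends
          {e\<in>E. (int (ord e) - int i) mod int (card E) < int (card V) - 1})"

definition cyclically_orderable :: "'v set \<Rightarrow> 'e set \<Rightarrow> ('e \<Rightarrow> 'v set) \<Rightarrow> bool" where
  "cyclically_orderable V E ends \<longleftrightarrow> (\<exists>ord. is_CBO V E ends ord)"

text \<open>Generalized theta graph with path lengths ls!0,...,ls!(k-1):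
  terminals TU, TW; internal vertex TI i j (1 <= j < ls!i) is the j-th vertex on
  path i; edge (i,j) (j < ls!i) joins the j-th and (j+1)-th vertex of path i.\<close>
datatype tvert = TU | TW | TI nat nat

definition theta_V :: "nat list \<Rightarrow> tvert set" where
  "theta_V ls = {TU, TW} \<union> {TI i j | i j. i < length ls \<and> 1 \<le> j \<and> j < ls ! i}"

definition theta_E :: "nat list \<Rightarrow> (nat \<times> nat) set" where
  "theta_E ls = {(i, j) | i j. i < length ls \<and> j < ls ! i}"

definition theta_pos :: "nat list \<Rightarrow> nat \<Rightarrow> nat \<Rightarrow> tvert" where
  "theta_pos ls i j = (if j = 0 then TU else if j = ls ! i then TW else TI i j)"

definition theta_ends :: "nat list \<Rightarrow> nat \<times> nat \<Rightarrow> tvert set" where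
  "theta_ends ls e = {theta_pos ls (fst e) (snd e), theta_pos ls (fst e) (snd e + 1)}"

end

theory Submission
  imports Defs
begin

(* Every window F of a cyclic base ordering is a spanning tree, so its complement has
   |E| - |V| + 1 = k - 1 edges; and a spanning tree of the theta graph omits at most one
   edge from each path, since omitting two would cut off the internal vertices between them.
   Hence the complement meets the first t paths in at least (k - 1) - (k - t) = t - 1 edges.
   Summing over the |E| = l_1 + ... + l_k windows, and using that every edge lies outside
   exactly k - 1 windows, gives (l_1 + ... + l_k)(t - 1) <= (l_1 + ... + l_t)(k - 1). *)

lemma card_cyclic_window:
  fixes p m :: nat and q :: int
  assumes p: "p \<in> {1..m}" and q: "q \<le> int m"
  shows "card {i\<in>{1..m}. (int p - int i) mod int m < q} = nat q"
proof -
  define g where "g i = (int p - int i) mod int m" for i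
  have m: "m > 0" using p by simp
  have inj: "inj_on g {1..m}"
  proof (rule inj_onI)
    fix i j assume i: "i \<in> {1..m}" and j: "j \<in> {1..m}" and "g i = g j"
    then have "int m dvd (int p - int i) - (int p - int j)"
      unfolding g_def by (simp add: mod_eq_dvd_iff)
    then have "int m dvd int j - int i" by simp
    moreover have "\<bar>int j - int i\<bar> < int m" using i j by auto
    ultimately have "int j - int i = 0"
      using dvd_imp_le_int[of "int j - int i" "int m"] by linarith
    then show "i = j" by simp
  qed
  have "g ` {1..m} \<subseteq> {0..<int m}" using m by (auto simp: g_def)
  then have img: "g ` {1..m} = {0..<int m}"
    using inj by (intro card_subset_eq) (simp_all add: card_image)
  have "g ` {i\<in>{1..m}. g i < q} = {0..<q}"
  proof
    show "{0..<q} \<subseteq> g ` {i\<in>{1..m}. g i < q}"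
    proof
      fix x assume x: "x \<in> {0..<q}"
      then have "x \<in> g ` {1..m}" using img q by simp
      then show "x \<in> g ` {i\<in>{1..m}. g i < q}" using x by auto
    qed
  qed (use img in auto)
  moreover have "inj_on g {i\<in>{1..m}. g i < q}" by (rule inj_on_subset[OF inj]) auto
  ultimately have "card {i\<in>{1..m}. g i < q} = nat q" by (metis card_image card_atLeastLessThan_int diff_zero)
  then show ?thesis by (simp add: g_def)
qed

definition cbo_window :: "'v set \<Rightarrow> 'e set \<Rightarrow> ('e \<Rightarrow> nat) \<Rightarrow> nat \<Rightarrow> 'e set" where
  "cbo_window V E ord i = {e\<in>E. (int (ord e) - int i) mod int (card E) < int (card V) - 1}"

lemma is_CBO_iff_windows:
  "is_CBO V E ends ord \<longleftrightarrow>
     bij_betw ord E {1..card E} \<and>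
     (\<forall>i\<in>{1..card E}. spanning_tree V ends (cbo_window V E ord i))"
  by (simp add: is_CBO_def cbo_window_def)

lemma is_CBO_finite: "is_CBO V E ends ord \<Longrightarrow> finite E"
  unfolding is_CBO_def by (metis bij_betw_finite card.infinite finite_atLeastAtMost)

lemma card_cbo_windows_containing:
  assumes cbo: "is_CBO V E ends ord" and e: "e \<in> E"
  shows "card {i\<in>{1..card E}. e \<in> cbo_window V E ord i} = card V - 1"
proof -
  have oe: "ord e \<in> {1..card E}" using cbo e by (auto simp: is_CBO_def bij_betw_def)
  have "card V - 1 = card (cbo_window V E ord (ord e))"
    using cbo oe by (simp add: is_CBO_iff_windows spanning_tree_def)
  also have "\<dots> \<le> card E"
    using is_CBO_finite[OF cbo] by (intro card_mono) (auto simp: cbo_window_def)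
  finally have "int (card V) - 1 \<le> int (card E)" by linarith
  from card_cyclic_window[OF oe this] e show ?thesis
    by (simp add: cbo_window_def)
qed

lemma sum_card_diff_cbo_windows:
  assumes cbo: "is_CBO V E ends ord" and H: "H \<subseteq> E"
  shows "(\<Sum>i\<in>{1..card E}. card (H - cbo_window V E ord i)) = card H * (card E - (card V - 1))"
proof -
  have "card {i\<in>{1..card E}. e \<notin> cbo_window V E ord i} = card E - (card V - 1)"
    if "e \<in> H" for e
  proof -
    have "{i\<in>{1..card E}. e \<notin> cbo_window V E ord i}
          = {1..card E} - {i\<in>{1..card E}. e \<in> cbo_window V E ord i}" by blast
    then show ?thesis
      using card_cbo_windows_containing[OF cbo] that H by (simp add: card_Diff_subset subset_iff)
  qed
  then have "(\<Sum>i\<in>{1..card E}. card {e\<in>H. e \<notin> cbo_window V E ord i})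
             = (card E - (card V - 1)) * card H"
    using is_CBO_finite[OF cbo] H by (intro sum_multicount) (auto intro: finite_subset)
  then show ?thesis by (simp add: set_diff_eq mult.commute)
qed

lemma finite_theta_E: "finite (theta_E ls)"
proof -
  have "theta_E ls = (SIGMA i:{..<length ls}. {..<ls ! i})" by (auto simp: theta_E_def)
  then show ?thesis by simp
qed

lemma card_theta_E_paths_below:
  assumes "t \<le> length ls"
  shows "card {e \<in> theta_E ls. fst e < t} = (\<Sum>i<t. ls ! i)"
proof -
  have "{e \<in> theta_E ls. fst e < t} = (SIGMA i:{..<t}. {..<ls ! i})"
    using assms by (auto simp: theta_E_def)
  then show ?thesis by (simp add: card_SigmaI)
qed

lemma card_theta_E: "card (theta_E ls) = (\<Sum>i<length ls. ls ! i)"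
proof -
  have "theta_E ls = {e \<in> theta_E ls. fst e < length ls}" by (auto simp: theta_E_def)
  then show ?thesis using card_theta_E_paths_below[of "length ls" ls] by simp
qed

lemma length_le_sum_nth:
  "\<forall>i<length ls. 1 \<le> ls ! i \<Longrightarrow> length ls \<le> (\<Sum>i<length ls. ls ! i)"
  using sum_mono[of "{..<length ls}" "\<lambda>_. 1::nat" "(!) ls"] by simp

lemma card_theta_V:
  assumes "\<forall>i<length ls. 1 \<le> ls ! i"
  shows "card (theta_V ls) + length ls = (\<Sum>i<length ls. ls ! i) + 2"
proof -
  let ?inner = "\<Union>i<length ls. TI i ` {1..<ls ! i}"
  have "theta_V ls = {TU, TW} \<union> ?inner" by (auto simp: theta_V_def)
  moreover have "card ?inner = (\<Sum>i<length ls. ls ! i - 1)"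
    by (subst card_UN_disjoint) (auto simp: card_image inj_on_def)
  ultimately have "card (theta_V ls) = (\<Sum>i<length ls. ls ! i - 1) + 2"
    by (auto simp: card_insert_if)
  moreover have "(\<Sum>i<length ls. ls ! i - 1) + length ls = (\<Sum>i<length ls. ls ! i - 1 + 1)"
    by (simp only: sum.distrib) simp
  moreover have "(\<Sum>i<length ls. ls ! i - 1 + 1) = (\<Sum>i<length ls. ls ! i)"
    using assms by (intro sum.cong) auto
  ultimately show ?thesis by simp
qed

lemma theta_reach_stays_in_segment:
  assumes F: "F \<subseteq> theta_E ls" and a: "(i, a) \<notin> F" and b: "(i, b) \<notin> F"
    and bl: "b < ls ! i"
    and reach: "(adj_in (theta_ends ls) F)\<^sup>*\<^sup>* x y"
    and x: "x \<in> {TI i j | j. a < j \<and> j \<le> b}"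
  shows "y \<in> {TI i j | j. a < j \<and> j \<le> b}"
  using reach x
proof (induction rule: rtranclp_induct)
  case (step y z)
  then obtain j where y: "y = TI i j" "a < j" "j \<le> b" by auto
  from step.hyps(2) obtain i' j' where e: "(i', j') \<in> F"
    and yz: "{theta_pos ls i' j', theta_pos ls i' (j' + 1)} = {y, z}"
    unfolding adj_in_def theta_ends_def by auto
  have j'l: "j' < ls ! i'" using e F by (auto simp: theta_E_def)
  show ?case
  proof (cases "y = theta_pos ls i' j'")
    case True
    then have ij: "i' = i" "j' = j" using y by (auto simp: theta_pos_def split: if_splits)
    then have "j < b" using e b y by (cases "j = b") auto
    then have "theta_pos ls i' (j' + 1) = TI i (j + 1)" using ij bl by (simp add: theta_pos_def)
    then have "z = y \<or> z = TI i (j + 1)" using yz True by (auto simp: doubleton_eq_iff)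
    then show ?thesis using y \<open>j < b\<close> by auto
  next
    case False
    then have "y = theta_pos ls i' (j' + 1)" using yz by (auto simp: doubleton_eq_iff)
    then have ij: "i' = i" "j' + 1 = j" using y by (auto simp: theta_pos_def split: if_splits)
    then have "a < j'" using e a y by (cases "j' = a") auto
    then have "theta_pos ls i' j' = TI i j'" using ij j'l by (simp add: theta_pos_def)
    then have "z = y \<or> z = TI i j'" using yz False by (auto simp: doubleton_eq_iff)
    then show ?thesis using y ij \<open>a < j'\<close> by auto
  qed
qed simp

lemma theta_tree_misses_one_edge_per_path:
  assumes tree: "spanning_tree (theta_V ls) (theta_ends ls) F" and F: "F \<subseteq> theta_E ls"
  shows "inj_on fst (theta_E ls - F)"
proof -
  have False if a: "(i, a) \<in> theta_E ls - F" and b: "(i, b) \<in> theta_E ls - F" and ab: "a < b"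
    for i a b
  proof -
    have "i < length ls" "b < ls ! i" using b by (auto simp: theta_E_def)
    then have "TI i (a + 1) \<in> theta_V ls" "TU \<in> theta_V ls" using ab by (auto simp: theta_V_def)
    then have "(adj_in (theta_ends ls) F)\<^sup>*\<^sup>* (TI i (a + 1)) TU"
      using tree by (simp add: spanning_tree_def)
    from theta_reach_stays_in_segment[OF F _ _ \<open>b < ls ! i\<close> this] a b ab show False by auto
  qed
  then show ?thesis
    by (intro inj_onI) (metis linorder_neqE_nat prod.collapse)
qed

lemma card_le_card_fst_less_plus:
  assumes "finite C" and "inj_on fst C" and "fst ` C \<subseteq> {..<k}"
  shows "card C \<le> card {c\<in>C. fst c < t} + (k - t)"
proof -
  have "card {c\<in>C. \<not> fst c < t} = card (fst ` {c\<in>C. \<not> fst c < t})"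
    using assms(2) by (intro card_image[symmetric]) (auto intro: inj_on_subset)
  also have "\<dots> \<le> card {t..<k}"
    using assms(3) by (intro card_mono) auto
  finally have above: "card {c\<in>C. \<not> fst c < t} \<le> k - t" by simp
  have "card C = card ({c\<in>C. fst c < t} \<union> {c\<in>C. \<not> fst c < t})"
    by (rule arg_cong[where f = card]) blast
  also have "\<dots> = card {c\<in>C. fst c < t} + card {c\<in>C. \<not> fst c < t}"
    using assms(1) by (simp add: card_Un_disjoint disjoint_iff)
  finally show ?thesis using above by linarith
qed

lemma theta_tree_misses_paths_below:
  assumes tree: "spanning_tree (theta_V ls) (theta_ends ls) F" and F: "F \<subseteq> theta_E ls"
    and pos: "\<forall>i<length ls. 1 \<le> ls ! i" and t: "t \<le> length ls"
  shows "t - 1 \<le> card ({e\<in>theta_E ls. fst e < t} - F)"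
proof -
  let ?C = "theta_E ls - F"
  have "card F = card (theta_V ls) - 1" using tree by (simp add: spanning_tree_def)
  then have "card ?C = length ls - 1"
    using card_Diff_subset[OF finite_subset[OF F finite_theta_E] F] card_theta_E[of ls]
      card_theta_V[OF pos] length_le_sum_nth[OF pos] by linarith
  moreover have "card ?C \<le> card {e\<in>?C. fst e < t} + (length ls - t)"
    using finite_theta_E theta_tree_misses_one_edge_per_path[OF tree F]
    by (intro card_le_card_fst_less_plus) (auto simp: theta_E_def)
  moreover have "{e\<in>?C. fst e < t} = {e\<in>theta_E ls. fst e < t} - F" by blast
  ultimately have "length ls - 1 \<le> card ({e\<in>theta_E ls. fst e < t} - F) + (length ls - t)"
    by simp
  then show ?thesis using t by linarith
qed

lemma theta_CBO_paths_below_bound: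
  assumes cbo: "is_CBO (theta_V ls) (theta_E ls) (theta_ends ls) ord"
    and pos: "\<forall>i<length ls. 1 \<le> ls ! i" and t: "t \<le> length ls"
  shows "(\<Sum>i<length ls. ls ! i) * (t - 1) \<le> (\<Sum>i<t. ls ! i) * (length ls - 1)"
proof -
  let ?E = "theta_E ls" and ?V = "theta_V ls"
  let ?H = "{e\<in>?E. fst e < t}" and ?W = "cbo_window ?V ?E ord"
  have "(\<Sum>i<length ls. ls ! i) * (t - 1) = (\<Sum>i\<in>{1..card ?E}. t - 1)"
    by (simp add: card_theta_E)
  also have "\<dots> \<le> (\<Sum>i\<in>{1..card ?E}. card (?H - ?W i))"
    using cbo pos t
    by (intro sum_mono theta_tree_misses_paths_below) (auto simp: is_CBO_iff_windows cbo_window_def)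
  also have "\<dots> = card ?H * (card ?E - (card ?V - 1))"
    by (rule sum_card_diff_cbo_windows[OF cbo]) auto
  also have "card ?E - (card ?V - 1) = length ls - 1"
    using card_theta_E[of ls] card_theta_V[OF pos] length_le_sum_nth[OF pos] by linarith
  finally show ?thesis using card_theta_E_paths_below[OF t] by simp
qed

theorem mainTheorem8:
  fixes ls :: "nat list"
  assumes "length ls \<ge> 2"
    and "\<forall>i<length ls. ls ! i \<ge> 1"
    and "sorted ls"
    and "cyclically_orderable (theta_V ls) (theta_E ls) (theta_ends ls)"
  shows "\<forall>t. 2 \<le> t \<and> t \<le> length ls \<longrightarrow>
           real (\<Sum>i<t. ls ! i) / real (t - 1)
             \<ge> real (\<Sum>i<length ls. ls ! i) / real (length ls - 1)"
proof (intro allI impI)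
  fix t assume t: "2 \<le> t \<and> t \<le> length ls"
  obtain ord where "is_CBO (theta_V ls) (theta_E ls) (theta_ends ls) ord"
    using assms(4) by (auto simp: cyclically_orderable_def)
  from theta_CBO_paths_below_bound[OF this assms(2)] t
  have "real (\<Sum>i<length ls. ls ! i) * real (t - 1) \<le> real (\<Sum>i<t. ls ! i) * real (length ls - 1)"
    by (metis of_nat_mult of_nat_le_iff)
  moreover have "real (t - 1) > 0" "real (length ls - 1) > 0" using t by auto
  ultimately show "real (\<Sum>i<length ls. ls ! i) / real (length ls - 1) \<le> real (\<Sum>i<t. ls ! i) / real (t - 1)"
    by (simp add: divide_le_eq le_divide_eq mult.commute)
qed

end
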